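(* Let $K>0$, $K\neq 1$, and let \[ A_4=\begin{pmatrix} 1 & K & K\\ K & 1 & 1\\ K & 1 & 1\end{pmatrix}. \] Then \[ S(A_4)=\begin{pmatrix} a & b & b\\ b & c & c\\ b & c & c\end{pmatrix} \] with \[ a=\frac{-K^2-2+K\sqrt{K^2+8}}{2(K^2-1)},\qquad b=\frac{3K^2-K\sqrt{K^2+8}}{4(K^2-1)},\qquad c=\frac{K^2-4+K\sqrt{K^2+8}}{8(K^2-1)}, \] and \[ \lim_{K\to\infty}S(A_4)=\begin{pmatrix} 0 & 1/2 & 1/2\\ 1/2 & 1/4 & 1/4\\ 1/2 & 1/4 & 1/4\end{pmatrix}. \]
   Context: For a positive $n\times n$ matrix $A$, the Sinkhorn limit $S(A)$ is the unique doubly stochastic matrix of the form $XAY$ with $X,Y$ positive diagonal matrices; it is the limit of alternately row scaling (dividing each row by its row sum) and column scaling (dividing each column by its column sum) starting from $A$. For a positive symmetric matrix $A$ there is a unique positive diagonal $X$ with $S(A)=XAX$. *)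

theory Defs
  imports "HOL-Analysis.Analysis"
begin

definition doubly_stochastic :: "real^'n^'n \<Rightarrow> bool" where
  "doubly_stochastic M \<longleftrightarrow> (\<forall>i j. M $ i $ j \<ge> 0) \<and>
     (\<forall>i. (\<Sum>j\<in>UNIV. M $ i $ j) = 1) \<and> (\<forall>j. (\<Sum>i\<in>UNIV. M $ i $ j) = 1)"

definition positive_matrix :: "real^'n^'n \<Rightarrow> bool" where
  "positive_matrix A \<longleftrightarrow> (\<forall>i j. A $ i $ j > 0)"

definition pos_diag :: "real^'n^'n \<Rightarrow> bool" where
  "pos_diag X \<longleftrightarrow> (\<forall>i j. i \<noteq> j \<longrightarrow> X $ i $ j = 0) \<and> (\<forall>i. X $ i $ i > 0)"

text \<open>Sinkhorn limit: the unique doubly stochastic matrix of the form X A Y with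
  X, Y positive diagonal matrices.\<close>
definition sinkhorn :: "real^'n^'n \<Rightarrow> real^'n^'n" where
  "sinkhorn A = (THE D. doubly_stochastic D \<and>
      (\<exists>X Y. pos_diag X \<and> pos_diag Y \<and> D = X ** A ** Y))"

definition A4 :: "real \<Rightarrow> real^3^3" where
  "A4 K = vector [vector [1, K, K], vector [K, 1, 1], vector [K, 1, 1]]"

end

theory Submission
  imports Defs "HOL-Real_Asymp.Real_Asymp"
begin

text \<open>Since \<open>A4 K\<close> has the symmetry swapping the last two indices, one looks for a
  scaling \<open>diag (x, y, y) A4 diag (x, y, y)\<close>. Its entries are \<open>a = x\<^sup>2\<close>, \<open>b = K x y\<close>,
  \<open>c = y\<^sup>2\<close>, so it is doubly stochastic iff \<open>a + 2b = 1\<close>, \<open>b + 2c = 1\<close> and \<open>b\<^sup>2 = K\<^sup>2 a c\<close>;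
  eliminating \<open>a\<close> and \<open>c\<close> leaves a quadratic in \<open>b\<close> whose positive root gives the
  stated formulas. That this scaling is the Sinkhorn limit follows from uniqueness of
  doubly stochastic diagonal scalings, which is a min/max argument on the scaling factors.\<close>

lemma matrix_mult_pos_diag_nth:
  fixes X A Y :: "real^'n^'n"
  assumes "pos_diag X" "pos_diag Y"
  shows "(X ** A ** Y) $ i $ j = X$i$i * A$i$j * Y$j$j"
proof -
  have XA: "(X ** A) $ i $ k = X$i$i * A$i$k" for k
  proof -
    have "(X ** A) $ i $ k = (\<Sum>l\<in>UNIV. X$i$l * A$l$k)"
      by (simp add: matrix_matrix_mult_def)
    also have "\<dots> = (\<Sum>l\<in>UNIV. if l = i then X$i$i * A$i$k else 0)"
      by (rule sum.cong) (use assms(1) in \<open>auto simp: pos_diag_def\<close>)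
    finally show ?thesis by simp
  qed
  have "(X ** A ** Y) $ i $ j = (\<Sum>l\<in>UNIV. (X ** A)$i$l * Y$l$j)"
    by (simp add: matrix_matrix_mult_def)
  also have "\<dots> = (\<Sum>l\<in>UNIV. if l = j then X$i$i * A$i$j * Y$j$j else 0)"
    by (rule sum.cong) (use assms(2) in \<open>auto simp: pos_diag_def XA\<close>)
  finally show ?thesis by simp
qed

lemma convex_comb_le_bound:
  fixes w v :: "'a \<Rightarrow> real"
  assumes "\<And>j. j \<in> S \<Longrightarrow> w j \<ge> 0" "sum w S = 1" "\<And>j. j \<in> S \<Longrightarrow> v j \<le> M"
  shows "(\<Sum>j\<in>S. w j * v j) \<le> M"
proof -
  have "(\<Sum>j\<in>S. w j * v j) \<le> (\<Sum>j\<in>S. w j * M)"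
    by (rule sum_mono) (simp add: assms mult_left_mono)
  also have "\<dots> = sum w S * M" by (rule sum_distrib_right[symmetric])
  also have "\<dots> = M" using assms(2) by simp
  finally show ?thesis .
qed

lemma convex_comb_ge_bound:
  fixes w v :: "'a \<Rightarrow> real"
  assumes "\<And>j. j \<in> S \<Longrightarrow> w j \<ge> 0" "sum w S = 1" "\<And>j. j \<in> S \<Longrightarrow> m \<le> v j"
  shows "m \<le> (\<Sum>j\<in>S. w j * v j)"
  using convex_comb_le_bound[of S w "\<lambda>j. - v j" "- m"] assms
  by (simp add: sum_negf)

lemma convex_comb_eq_bound_imp_eq:
  fixes w v :: "'a \<Rightarrow> real"
  assumes "finite S" "\<And>j. j \<in> S \<Longrightarrow> w j > 0" "sum w S = 1"
    and "\<And>j. j \<in> S \<Longrightarrow> v j \<le> M" "(\<Sum>j\<in>S. w j * v j) = M" "j \<in> S"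
  shows "v j = M"
proof -
  have "(\<Sum>j\<in>S. w j * (M - v j)) = (\<Sum>j\<in>S. w j) * M - (\<Sum>j\<in>S. w j * v j)"
    by (simp add: right_diff_distrib sum_subtractf sum_distrib_right)
  also have "\<dots> = 0" using assms(3,5) by simp
  finally have "\<forall>j\<in>S. w j * (M - v j) = 0"
    using assms(1,2,4) by (subst sum_nonneg_eq_0_iff[symmetric]) (auto simp: less_imp_le)
  then show ?thesis using assms(2,6) by force
qed

text \<open>With \<open>m = min u\<close> attained in row \<open>i\<^sub>0\<close> and \<open>M = max v\<close> attained in column \<open>j\<^sub>0\<close>, row \<open>i\<^sub>0\<close>
  gives \<open>m M \<ge> 1\<close> and column \<open>j\<^sub>0\<close> gives \<open>m M \<le> 1\<close>; equality in row \<open>i\<^sub>0\<close> then forces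
  \<open>v\<close> to be constant.\<close>

lemma doubly_stochastic_rescaling_trivial:
  fixes D :: "real^'n^'n" and u v :: "'n \<Rightarrow> real"
  assumes D: "positive_matrix D" "doubly_stochastic D"
    and uv: "\<And>i. u i > 0" "\<And>j. v j > 0"
    and rows: "\<And>i. (\<Sum>j\<in>UNIV. u i * D$i$j * v j) = 1"
    and cols: "\<And>j. (\<Sum>i\<in>UNIV. u i * D$i$j * v j) = 1"
  shows "u i * v j = 1"
proof -
  have Dpos: "D$i$j > 0" for i j using D(1) by (simp add: positive_matrix_def)
  have Drow: "(\<Sum>j\<in>UNIV. D$i$j) = 1" and Dcol: "(\<Sum>i\<in>UNIV. D$i$j) = 1" for i j
    using D(2) by (auto simp: doubly_stochastic_def)
  obtain i0 where min_u: "\<And>i. u i0 \<le> u i"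
    using arg_min_least[OF finite UNIV_not_empty UNIV_I, of u] by blast
  obtain j0 where max_v: "\<And>j. v j \<le> v j0"
    using arg_min_least[OF finite UNIV_not_empty UNIV_I, of "\<lambda>j. - v j"] by force
  have row_i0: "u i0 * (\<Sum>j\<in>UNIV. D$i0$j * v j) = 1"
    using rows[of i0] by (simp add: sum_distrib_left mult.assoc)
  have col_j0: "v j0 * (\<Sum>i\<in>UNIV. D$i$j0 * u i) = 1"
    using cols[of j0] by (simp add: sum_distrib_left algebra_simps)
  have "(\<Sum>j\<in>UNIV. D$i0$j * v j) \<le> v j0"
    by (rule convex_comb_le_bound) (use Dpos Drow max_v in \<open>auto simp: less_imp_le\<close>)
  then have "1 \<le> u i0 * v j0"
    using row_i0 mult_left_mono[of _ _ "u i0"] uv(1)[of i0] by fastforce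
  moreover have "u i0 \<le> (\<Sum>i\<in>UNIV. D$i$j0 * u i)"
    by (rule convex_comb_ge_bound) (use Dpos Dcol min_u in \<open>auto simp: less_imp_le\<close>)
  then have "v j0 * u i0 \<le> 1"
    using col_j0 mult_left_mono[of _ _ "v j0"] uv(2)[of j0] by fastforce
  ultimately have "u i0 * (\<Sum>j\<in>UNIV. D$i0$j * v j) = u i0 * v j0"
    using row_i0 by (simp add: mult.commute)
  then have "(\<Sum>j\<in>UNIV. D$i0$j * v j) = v j0"
    using uv(1)[of i0] by simp
  then have "v j = v j0" for j
    by (rule convex_comb_eq_bound_imp_eq[OF finite Dpos Drow max_v _ UNIV_I])
  then obtain M where v_const: "\<And>j. v j = M" by blast
  have "u i * M * (\<Sum>j\<in>UNIV. D$i$j) = 1"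
    using rows[of i] by (simp add: v_const sum_distrib_left algebra_simps)
  then show ?thesis using Drow v_const by simp
qed

lemma sinkhorn_eqI:
  fixes A :: "real^'n^'n"
  assumes A: "positive_matrix A" and D: "doubly_stochastic D"
    and XY: "pos_diag X" "pos_diag Y" and D_eq: "D = X ** A ** Y"
  shows "sinkhorn A = D"
  unfolding sinkhorn_def
proof (rule the_equality)
  show "doubly_stochastic D \<and> (\<exists>X Y. pos_diag X \<and> pos_diag Y \<and> D = X ** A ** Y)"
    using assms by blast
next
  fix D' assume "doubly_stochastic D' \<and> (\<exists>X Y. pos_diag X \<and> pos_diag Y \<and> D' = X ** A ** Y)"
  then obtain X' Y' where D': "doubly_stochastic D'" "pos_diag X'" "pos_diag Y'" "D' = X' ** A ** Y'"
    by blast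
  have diag_pos: "X$i$i > 0" "Y$i$i > 0" "X'$i$i > 0" "Y'$i$i > 0" for i
    using XY D' by (auto simp: pos_diag_def)
  define u where "u i = X'$i$i / X$i$i" for i
  define v where "v j = Y'$j$j / Y$j$j" for j
  have D_nth: "D$i$j = X$i$i * A$i$j * Y$j$j" for i j
    using matrix_mult_pos_diag_nth[OF XY] D_eq by simp
  have D'_nth: "D'$i$j = u i * D$i$j * v j" for i j
    using matrix_mult_pos_diag_nth[OF D'(2,3)] D'(4) diag_pos[of i] diag_pos[of j]
    by (simp add: D_nth u_def v_def field_simps)
  have "u i * v j = 1" for i j
  proof (rule doubly_stochastic_rescaling_trivial[OF _ D])
    show "positive_matrix D"
      using A diag_pos by (simp add: positive_matrix_def D_nth)
    show "u i > 0" "v j > 0" for i j using diag_pos by (simp_all add: u_def v_def)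
    show "(\<Sum>j\<in>UNIV. u i * D$i$j * v j) = 1" "(\<Sum>i\<in>UNIV. u i * D$i$j * v j) = 1" for i j
      using D'(1) by (simp_all add: doubly_stochastic_def D'_nth[symmetric])
  qed
  then show "D' = D" by (simp add: vec_eq_iff D'_nth mult.commute mult.left_commute)
qed

definition diag_mat :: "real^'n \<Rightarrow> real^'n^'n" where
  "diag_mat d = (\<chi> i j. if i = j then d $ i else 0)"

lemma pos_diag_diag_mat_iff: "pos_diag (diag_mat d) \<longleftrightarrow> (\<forall>i. d $ i > 0)"
  by (simp add: pos_diag_def diag_mat_def)

lemma sinkhorn_A4_eqI:
  fixes K a b c :: real
  assumes "K > 0" "a > 0" "b > 0" "c > 0" "a + 2 * b = 1" "b + 2 * c = 1"
    and "b^2 = K^2 * (a * c)"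
  shows "sinkhorn (A4 K) = vector [vector [a, b, b], vector [b, c, c], vector [b, c, c]]"
proof -
  let ?D = "vector [vector [a, b, b], vector [b, c, c], vector [b, c, c]] :: real^3^3"
  let ?X = "diag_mat (vector [sqrt a, sqrt c, sqrt c] :: real^3)"
  have pX: "pos_diag ?X"
    by (simp add: pos_diag_diag_mat_iff forall_3 assms)
  have "positive_matrix (A4 K)"
    using assms by (simp add: positive_matrix_def A4_def forall_3)
  moreover have "doubly_stochastic ?D"
    using assms by (simp add: doubly_stochastic_def forall_3 sum_3 less_imp_le)
  moreover have "b = K * (sqrt a * sqrt c)"
    using assms by (metis real_sqrt_mult real_sqrt_abs real_sqrt_unique less_imp_le)
  then have "?D = ?X ** A4 K ** ?X"
    unfolding vec_eq_iff matrix_mult_pos_diag_nth[OF pX pX]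
    using assms by (simp add: forall_3 diag_mat_def A4_def mult_ac)
  ultimately show ?thesis by (rule sinkhorn_eqI[OF _ _ pX pX])
qed

text \<open>The paper's \<open>a, b, c\<close> with the square root moved to the denominator; in this form
  they are defined and positive also for \<open>K = 1\<close>.\<close>

definition A4_a :: "real \<Rightarrow> real" where
  "A4_a K = 2 / (K * sqrt (K^2 + 8) + K^2 + 2)"

definition A4_b :: "real \<Rightarrow> real" where
  "A4_b K = 2 * K / (3 * K + sqrt (K^2 + 8))"

definition A4_c :: "real \<Rightarrow> real" where
  "A4_c K = 2 / (K * sqrt (K^2 + 8) + 4 - K^2)"

lemma A4_abc_pos:
  fixes K :: real
  assumes "K > 0"
  shows "A4_a K > 0" "A4_b K > 0" "A4_c K > 0"
proof -
  have "K < sqrt (K^2 + 8)" by (rule real_less_rsqrt) simp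
  then have "K^2 < K * sqrt (K^2 + 8)" using assms by (simp add: power2_eq_square)
  then show "A4_a K > 0" "A4_b K > 0" "A4_c K > 0"
    using assms by (simp_all add: A4_a_def A4_b_def A4_c_def add_pos_pos)
qed

lemma A4_abc_relations:
  fixes K :: real
  assumes "K > 0"
  shows "A4_a K + 2 * A4_b K = 1" "A4_b K + 2 * A4_c K = 1"
    and "(A4_b K)^2 = K^2 * (A4_a K * A4_c K)"
proof -
  define s where "s = sqrt (K^2 + 8)"
  have s2: "s^2 = K^2 + 8" by (simp add: s_def)
  have da: "K * s + K^2 + 2 \<noteq> 0" and db: "3 * K + s \<noteq> 0" and dc: "K * s + 4 - K^2 \<noteq> 0"
    using A4_abc_pos[OF assms] by (auto simp: A4_a_def A4_b_def A4_c_def s_def)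
  show "A4_a K + 2 * A4_b K = 1"
    unfolding A4_a_def A4_b_def s_def[symmetric] using da db
    by (simp add: field_simps) (use s2 in algebra)
  show "A4_b K + 2 * A4_c K = 1"
    unfolding A4_c_def A4_b_def s_def[symmetric] using dc db
    by (simp add: field_simps) (use s2 in algebra)
  show "(A4_b K)^2 = K^2 * (A4_a K * A4_c K)"
    unfolding A4_a_def A4_b_def A4_c_def s_def[symmetric] using da db dc
    by (simp add: field_simps) (use s2 in algebra)
qed

lemma sinkhorn_A4:
  fixes K :: real
  assumes "K > 0"
  shows "sinkhorn (A4 K) = vector [vector [A4_a K, A4_b K, A4_b K],
    vector [A4_b K, A4_c K, A4_c K], vector [A4_b K, A4_c K, A4_c K]]"
  using assms A4_abc_pos[OF assms] A4_abc_relations[OF assms] by (rule sinkhorn_A4_eqI)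

lemma A4_abc_closed_forms:
  fixes K :: real
  assumes "K > 0" "K \<noteq> 1"
  shows "A4_a K = (- (K^2) - 2 + K * sqrt (K^2 + 8)) / (2 * (K^2 - 1))"
    and "A4_b K = (3 * K^2 - K * sqrt (K^2 + 8)) / (4 * (K^2 - 1))"
    and "A4_c K = (K^2 - 4 + K * sqrt (K^2 + 8)) / (8 * (K^2 - 1))"
proof -
  define s where "s = sqrt (K^2 + 8)"
  have s2: "s^2 = K^2 + 8" by (simp add: s_def)
  have d: "K^2 - 1 \<noteq> 0" using assms by (simp add: power2_eq_1_iff)
  have da: "K * s + K^2 + 2 \<noteq> 0" and db: "3 * K + s \<noteq> 0" and dc: "K * s + 4 - K^2 \<noteq> 0"
    using A4_abc_pos[OF assms(1)] by (auto simp: A4_a_def A4_b_def A4_c_def s_def)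
  show "A4_a K = (- (K^2) - 2 + K * sqrt (K^2 + 8)) / (2 * (K^2 - 1))"
    unfolding A4_a_def s_def[symmetric] using d da
    by (simp add: field_simps) (use s2 in algebra)
  show "A4_b K = (3 * K^2 - K * sqrt (K^2 + 8)) / (4 * (K^2 - 1))"
    unfolding A4_b_def s_def[symmetric] using d db
    by (simp add: field_simps) (use s2 in algebra)
  show "A4_c K = (K^2 - 4 + K * sqrt (K^2 + 8)) / (8 * (K^2 - 1))"
    unfolding A4_c_def s_def[symmetric] using d dc
    by (simp add: field_simps) (use s2 in algebra)
qed

lemma tendsto_sym_block_matrix:
  fixes f g h :: "'a \<Rightarrow> real"
  assumes "(f \<longlongrightarrow> a) F" "(g \<longlongrightarrow> b) F" "(h \<longlongrightarrow> c) F"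
  shows "((\<lambda>x. vector [vector [f x, g x, g x], vector [g x, h x, h x], vector [g x, h x, h x]]
      :: real^3^3) \<longlongrightarrow> vector [vector [a, b, b], vector [b, c, c], vector [b, c, c]]) F"
proof (intro vec_tendstoI)
  fix i j :: 3
  show "((\<lambda>x. (vector [vector [f x, g x, g x], vector [g x, h x, h x], vector [g x, h x, h x]]
      :: real^3^3) $ i $ j) \<longlongrightarrow>
      (vector [vector [a, b, b], vector [b, c, c], vector [b, c, c]] :: real^3^3) $ i $ j) F"
    using exhaust_3[of i] exhaust_3[of j] assms by (elim disjE) simp_all
qed

theorem mainTheorem9:
  shows "(\<forall>K::real. K > 0 \<and> K \<noteq> 1 \<longrightarrow>
      (let a = (- (K^2) - 2 + K * sqrt (K^2 + 8)) / (2 * (K^2 - 1));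
           b = (3 * K^2 - K * sqrt (K^2 + 8)) / (4 * (K^2 - 1));
           c = (K^2 - 4 + K * sqrt (K^2 + 8)) / (8 * (K^2 - 1))
       in sinkhorn (A4 K) = vector [vector [a, b, b], vector [b, c, c], vector [b, c, c]]))
    \<and> ((\<lambda>K. sinkhorn (A4 K)) \<longlongrightarrow>
         vector [vector [0, 1/2, 1/2], vector [1/2, 1/4, 1/4], vector [1/2, 1/4, 1/4]]) at_top"
proof (intro conjI allI impI)
  fix K :: real
  assume "K > 0 \<and> K \<noteq> 1"
  then show "let a = (- (K^2) - 2 + K * sqrt (K^2 + 8)) / (2 * (K^2 - 1));
           b = (3 * K^2 - K * sqrt (K^2 + 8)) / (4 * (K^2 - 1));
           c = (K^2 - 4 + K * sqrt (K^2 + 8)) / (8 * (K^2 - 1))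
       in sinkhorn (A4 K) = vector [vector [a, b, b], vector [b, c, c], vector [b, c, c]]"
    using sinkhorn_A4 A4_abc_closed_forms by (simp add: Let_def)
next
  have "(A4_a \<longlongrightarrow> 0) at_top" "(A4_b \<longlongrightarrow> 1/2) at_top" "(A4_c \<longlongrightarrow> 1/4) at_top"
    unfolding A4_a_def A4_b_def A4_c_def by real_asymp+
  then have "((\<lambda>K. vector [vector [A4_a K, A4_b K, A4_b K], vector [A4_b K, A4_c K, A4_c K],
      vector [A4_b K, A4_c K, A4_c K]] :: real^3^3) \<longlongrightarrow>
      vector [vector [0, 1/2, 1/2], vector [1/2, 1/4, 1/4], vector [1/2, 1/4, 1/4]]) at_top"
    by (rule tendsto_sym_block_matrix)
  moreover have "\<forall>\<^sub>F K in at_top. vector [vector [A4_a K, A4_b K, A4_b K],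
      vector [A4_b K, A4_c K, A4_c K], vector [A4_b K, A4_c K, A4_c K]] = sinkhorn (A4 K)"
    using eventually_gt_at_top[of "0::real"] by eventually_elim (simp add: sinkhorn_A4)
  ultimately show "((\<lambda>K. sinkhorn (A4 K)) \<longlongrightarrow>
      vector [vector [0, 1/2, 1/2], vector [1/2, 1/4, 1/4], vector [1/2, 1/4, 1/4]]) at_top"
    by (rule Lim_transform_eventually)
qed

end
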